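(* Let $x_0\in\mathbb{R}$ and let $S:\mathbb{R}\to\mathbb{R}$ be a twice differentiable, decreasing function with $S''(\sigma)<0$ for all $\sigma$ (so $S$ is strictly concave downwards). Let $\{\Lambda_m\}_{m\in\mathbb{N}}$, $\{r_m\}_{m\in\mathbb{N}}$ and $I$ be as in the context. Let $(\mathcal{C}_{j,k})$ and $(\lambda_{j,k})$, indexed by $j\ge 0$, $k\in\mathbb{Z}$ with $|k-2^jx_0|<2^j$, be sequences of positive numbers such that: (i) for every $C\in\mathbb{R}$ and every choice of integers $k_j$ with $|k_j-2^jx_0|<2^j$, $$\limsup_{j\to+\infty}\left(\frac{\log_2(\mathcal{C}_{j,k_j})}{j}+C\,\frac{\log_2(\lambda_{j,k_j})}{j}\right)\le 0;$$ (ii) for every sequence of pairs $(j,k_j)\in I$ with $j\to+\infty$, $$\lim_{j\to+\infty}\frac{\log_2(\mathcal{C}_{j,k_j})}{j}=0\quad\text{and}\quad \lim_{j\to+\infty}\frac{\log_2(\lambda_{j,k_j})}{j}=0.$$ Let coefficients $c_{j,k}$ ($j\ge0$, $|k-2^jx_0|<2^j$) satisfy $$|c_{j,k}|\le \mathcal{C}_{j,k}\cdot\inf_{\sigma\in\mathbb{R}}\left\{2^{-jS(\sigma)}\left(\frac{1+|k-2^jx_0|}{\lambda_{j,k}}\right)^{S(\sigma)-\sigma}\right\},$$ with equality whenever $(j,k)\in I$. Let $\psi$ be a wavelet in the Schwartz class with all moments vanishing. Then the function (or distribution) defined near $x_0$ by $$f(x)=\sum_{j\ge0}\ \sum_{k\in\mathbb{Z},\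 |k-2^jx_0|<2^j} c_{j,k}\,\psi(2^jx-k)$$ has $S$ as its 2-microlocal frontier at $x_0$, i.e. $\sup\{s: f\in C^{s,\sigma-s}_{x_0}\}=S(\sigma)$ for every $\sigma\in\mathbb{R}$.
   Context: A wavelet is a function $\psi\in L^2(\mathbb{R})$ such that $\{2^{j/2}\psi(2^jx-k)\}_{j,k\in\mathbb{Z}}$ is an orthonormal basis of $L^2(\mathbb{R})$; the wavelet coefficients of $f$ are $c_{j,k}=2^{j/2}\langle f,\psi_{j,k}\rangle$ with $\psi_{j,k}(x)=2^{j/2}\psi(2^jx-k)$, so that $f=\sum c_{j,k}\psi(2^jx-k)$. For $s,s'\in\mathbb{R}$, the (local) 2-microlocal space $C^{s,s'}_{x_0}$ is defined as: $f\in C^{s,s'}_{x_0}$ iff there is $C>0$ with $|c_{j,k}|\le C\,2^{-js}(1+|k-2^jx_0|)^{-s'}$ for all $j\ge0$ and $k\in\mathbb{Z}$ with $|k/2^j-x_0|<1$ (the wavelet $\psi$ being Schwartz with all vanishing moments). The 2-microlocal frontier of $f$ at $x_0$ is the function $\sigma\mapsto\sup\{s: f\in C^{s,\sigma-s}_{x_0}\}$. Write $\mathbb{N}$ as a disjoint union $\mathbb{N}=\bigsqcup_{m\in\mathbb{N}}\Lambda_m$ of infinite sets $\Lambda_m$ (e.g. $\Lambda_m$ = natural numbers whose binary expansion has exactly $m$ ones). Let $\{r_m\}_{m\in\mathbb{N}}$ be a dense subset of $\mathrm{Im}\left(\frac{S'(\sigma)}{S'(\sigma)-1}\right)\subseteq[0,1]$.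 Define $$I=\{(j,k_j): j\in\Lambda_m \text{ for some } m,\ \text{and } [\,|k_j-2^jx_0|\,]=[2^{jr_m}]\},$$ where $[x]$ denotes the integer part of $x$. *)

theory Defs
  imports "HOL-Analysis.Analysis" "HOL-Library.Liminf_Limsup"
begin

definition loc_dom :: "real \<Rightarrow> (nat \<times> int) set" where
  "loc_dom x0 = {(j, k). \<bar>real_of_int k - 2 ^ j * x0\<bar> < 2 ^ j}"

text \<open>Local 2-microlocal space C^{s,s'}_{x0}, for a function given by its wavelet
  coefficients c j k (f = sum c j k psi(2^j x - k)), as defined in the context.\<close>
definition two_microlocal :: "real \<Rightarrow> (nat \<Rightarrow> int \<Rightarrow> real) \<Rightarrow> real \<Rightarrow> real \<Rightarrow> bool" where
  "two_microlocal x0 c s s' \<longleftrightarrow>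
     (\<exists>C>0. \<forall>j k. (j, k) \<in> loc_dom x0 \<longrightarrow>
        \<bar>c j k\<bar> \<le> C * 2 powr (- real j * s) * (1 + \<bar>real_of_int k - 2 ^ j * x0\<bar>) powr (- s'))"

definition two_microlocal_frontier :: "real \<Rightarrow> (nat \<Rightarrow> int \<Rightarrow> real) \<Rightarrow> real \<Rightarrow> ereal" where
  "two_microlocal_frontier x0 c \<sigma> = (SUP s\<in>{s. two_microlocal x0 c s (\<sigma> - s)}. ereal s)"

definition I_set :: "real \<Rightarrow> (nat \<Rightarrow> nat set) \<Rightarrow> (nat \<Rightarrow> real) \<Rightarrow> (nat \<times> int) set" where
  "I_set x0 \<Lambda> r = {(j, k). (j, k) \<in> loc_dom x0 \<and>
      (\<exists>m. j \<in> \<Lambda> m \<and> \<lfloor>\<bar>real_of_int k - 2 ^ j * x0\<bar>\<rfloor> = \<lfloor>2 powr (real j * r m)\<rfloor>)}"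

end

theory Submission
  imports Defs
begin

text \<open>If \<open>s < S(\<sigma>)\<close>, continuity gives \<open>\<delta> > 0\<close> with \<open>S(\<sigma> + \<delta>) > s\<close>, and the single
  term \<open>\<sigma> + \<delta>\<close> of the infimum bounds \<open>|c j k|\<close> by \<open>2^(-j s) (1 + |k - 2^j x0|)^(s - \<sigma>)\<close>
  times a gain \<open>2^(-j \<epsilon>)\<close>; condition (i) says exactly that this gain absorbs \<open>Cc\<close> and \<open>lam\<close>.
  Conversely, for \<open>(j, k) \<in> I\<close> with \<open>(1 + |k - 2^j x0|) / lam j k = 2^(j \<beta>)\<close>, the infimum equals
  \<open>2^(-j sup\<^sub>y ((1 - \<beta>) S y + \<beta> y))\<close>. For \<open>\<beta> = S'(\<sigma>) / (S'(\<sigma>) - 1)\<close> this concave function of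
  \<open>y\<close> is stationary, hence maximal, at \<open>y = \<sigma>\<close>; the supremum is locally Lipschitz in \<open>\<beta>\<close>
  (a supremum of affine functions), and by (ii) and the density of the \<open>r m\<close> the slopes realised
  along \<open>I\<close> approach this \<open>\<beta>\<close>. Comparing exponents then gives
  \<open>(1 - \<beta>) s + \<beta> \<sigma> \<le> (1 - \<beta>) S(\<sigma>) + \<beta> \<sigma>\<close> whenever \<open>f \<in> C^{s,\<sigma>-s}\<close>, i.e. \<open>s \<le> S(\<sigma>)\<close>.\<close>

section \<open>Strictly concave decreasing profiles\<close>

lemma deriv_neg_imp_strict_decreasing:
  fixes f f' :: "real \<Rightarrow> real"
  assumes "\<And>x. (f has_real_derivative f' x) (at x)" "\<And>x. f' x < 0" "a < b"
  shows "f b < f a"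
  using DERIV_neg_imp_decreasing[OF assms(3), of f] assms(1,2) by blast

lemma antimono_concave_deriv_neg:
  fixes S S' S'' :: "real \<Rightarrow> real"
  assumes S_deriv: "\<And>x. (S has_real_derivative S' x) (at x)"
    and S'_deriv: "\<And>x. (S' has_real_derivative S'' x) (at x)"
    and S''_neg: "\<And>x. S'' x < 0"
    and S_decr: "antimono S"
  shows "S' x < 0"
proof (rule ccontr)
  assume "\<not> S' x < 0"
  obtain z where z: "x - 1 < z" "z < x" "S x - S (x - 1) = S' z"
    using MVT2[of "x - 1" x S S'] S_deriv by auto
  have "S' x < S' z" using deriv_neg_imp_strict_decreasing[OF S'_deriv S''_neg z(2)] .
  with \<open>\<not> S' x < 0\<close> z(3) have "S (x - 1) < S x" by simp
  moreover have "S x \<le> S (x - 1)" using S_decr by (simp add: antimono_def)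
  ultimately show False by simp
qed

lemma concave_below_tangent:
  fixes S S' S'' :: "real \<Rightarrow> real"
  assumes S_deriv: "\<And>x. (S has_real_derivative S' x) (at x)"
    and S'_deriv: "\<And>x. (S' has_real_derivative S'' x) (at x)"
    and S''_neg: "\<And>x. S'' x < 0"
  shows "S y \<le> S x + S' x * (y - x)"
proof (cases x y rule: linorder_cases)
  case less
  obtain z where z: "x < z" "z < y" "S y - S x = (y - x) * S' z"
    using MVT2[OF less, of S S'] S_deriv by auto
  have "S' z < S' x" using deriv_neg_imp_strict_decreasing[OF S'_deriv S''_neg z(1)] .
  then have "(y - x) * S' z \<le> (y - x) * S' x" using less by (simp add: mult_left_mono)
  then show ?thesis using z(3) by (simp add: algebra_simps)
next
  case greater
  obtain z where z: "y < z" "z < x" "S x - S y = (x - y) * S' z"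
    using MVT2[OF greater, of S S'] S_deriv by auto
  have "S' x < S' z" using deriv_neg_imp_strict_decreasing[OF S'_deriv S''_neg z(2)] .
  then have "(x - y) * S' x \<le> (x - y) * S' z" using greater by (simp add: mult_left_mono)
  then show ?thesis using z(3) by (simp add: algebra_simps)
qed simp

definition dual_slope :: "real \<Rightarrow> real" where
  "dual_slope d = d / (d - 1)"

lemma dual_slope_bounds:
  assumes "d < 0"
  shows "0 < dual_slope d" "dual_slope d < 1"
  using assms by (simp_all add: dual_slope_def divide_neg_neg divide_less_eq)

lemma dual_slope_strict_antimono:
  assumes "d < 0" "d' < d"
  shows "dual_slope d < dual_slope d'"
  using assms by (simp add: dual_slope_def divide_less_eq less_divide_eq field_simps)

text \<open>With \<open>\<beta> = dual_slope (S' \<tau>)\<close> the concave function \<open>y \<mapsto> (1 - \<beta>) S y + \<beta> y\<close> has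
  derivative \<open>(1 - \<beta>) S' \<tau> + \<beta> = 0\<close> at \<open>\<tau>\<close>, so it attains its maximum there.\<close>
lemma dual_slope_max:
  fixes S S' S'' :: "real \<Rightarrow> real"
  assumes S_deriv: "\<And>x. (S has_real_derivative S' x) (at x)"
    and S'_deriv: "\<And>x. (S' has_real_derivative S'' x) (at x)"
    and S''_neg: "\<And>x. S'' x < 0"
    and S'_neg: "S' \<tau> < 0"
  defines "\<beta> \<equiv> dual_slope (S' \<tau>)"
  shows "(1 - \<beta>) * S y + \<beta> * y \<le> (1 - \<beta>) * S \<tau> + \<beta> * \<tau>"
proof -
  have "1 - \<beta> > 0" using dual_slope_bounds[OF S'_neg] unfolding \<beta>_def by simp
  then have "(1 - \<beta>) * S y \<le> (1 - \<beta>) * (S \<tau> + S' \<tau> * (y - \<tau>))"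
    using concave_below_tangent[OF S_deriv S'_deriv S''_neg] by (simp add: mult_left_mono)
  also have "\<dots> = (1 - \<beta>) * S \<tau> + ((1 - \<beta>) * S' \<tau>) * (y - \<tau>)"
    by (simp add: algebra_simps)
  also have "(1 - \<beta>) * S' \<tau> = - \<beta>"
    using S'_neg unfolding \<beta>_def dual_slope_def by (simp add: field_simps)
  finally show ?thesis by (simp add: algebra_simps)
qed

lemma affine_le_interpolation:
  fixes p q \<beta> u v Mp Mq :: real
  assumes "p < q" "p \<le> \<beta>" "\<beta> \<le> q" "(1 - p) * u + p * v \<le> Mp" "(1 - q) * u + q * v \<le> Mq"
  shows "(1 - \<beta>) * u + \<beta> * v \<le> ((q - \<beta>) * Mp + (\<beta> - p) * Mq) / (q - p)"
proof -
  have e: "(1 - \<beta>) * u + \<beta> * v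
      = ((q - \<beta>) * ((1 - p) * u + p * v) + (\<beta> - p) * ((1 - q) * u + q * v)) / (q - p)"
    using assms(1) by (simp add: field_simps)
  have "(q - \<beta>) * ((1 - p) * u + p * v) \<le> (q - \<beta>) * Mp"
    using assms by (simp add: mult_left_mono)
  moreover have "(\<beta> - p) * ((1 - q) * u + q * v) \<le> (\<beta> - p) * Mq"
    using assms by (simp add: mult_left_mono)
  ultimately show ?thesis unfolding e using assms(1) by (simp add: divide_right_mono)
qed

lemma affine_le_Lipschitz_near:
  fixes a \<alpha> b Ma M Mb \<beta> u v :: real
  assumes "a < \<alpha>" "\<alpha> < b"
    and "(1 - a) * u + a * v \<le> Ma" "(1 - \<alpha>) * u + \<alpha> * v \<le> M" "(1 - b) * u + b * v \<le> Mb"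
    and "\<bar>\<beta> - \<alpha>\<bar> \<le> min (\<alpha> - a) (b - \<alpha>)"
  shows "(1 - \<beta>) * u + \<beta> * v \<le> M + (\<bar>Mb - M\<bar> / (b - \<alpha>) + \<bar>Ma - M\<bar> / (\<alpha> - a)) * \<bar>\<beta> - \<alpha>\<bar>"
proof (cases "\<alpha> \<le> \<beta>")
  case True
  have "(1 - \<beta>) * u + \<beta> * v \<le> ((b - \<beta>) * M + (\<beta> - \<alpha>) * Mb) / (b - \<alpha>)"
    using affine_le_interpolation[OF assms(2) True _ assms(4,5)] assms(6) by auto
  also have "\<dots> = M + (\<beta> - \<alpha>) * ((Mb - M) / (b - \<alpha>))"
    using assms(2) by (simp add: field_simps)
  also have "\<dots> \<le> M + (\<beta> - \<alpha>) * (\<bar>Mb - M\<bar> / (b - \<alpha>) + \<bar>Ma - M\<bar> / (\<alpha> - a))"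
    using True assms(1,2)
    by (intro add_left_mono mult_left_mono add_increasing2 divide_right_mono) auto
  finally show ?thesis using True by (simp add: mult.commute)
next
  case False
  have "(1 - \<beta>) * u + \<beta> * v \<le> ((\<alpha> - \<beta>) * Ma + (\<beta> - a) * M) / (\<alpha> - a)"
    using affine_le_interpolation[OF assms(1) _ _ assms(3,4)] assms(6) False by auto
  also have "\<dots> = M + (\<alpha> - \<beta>) * ((Ma - M) / (\<alpha> - a))"
    using assms(1) by (simp add: field_simps)
  also have "\<dots> \<le> M + (\<alpha> - \<beta>) * (\<bar>Mb - M\<bar> / (b - \<alpha>) + \<bar>Ma - M\<bar> / (\<alpha> - a))"
    using False assms(1,2)
    by (intro add_left_mono mult_left_mono add_increasing divide_right_mono) auto
  finally show ?thesis using False by (simp add: mult.commute)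
qed

section \<open>The local index domain and the set I\<close>

lemma loc_dom_abs_bound:
  assumes "(j, k) \<in> loc_dom x0" "j \<le> N"
  shows "\<bar>k\<bar> \<le> \<lceil>2 ^ N * (\<bar>x0\<bar> + 1)\<rceil>"
proof -
  have "\<bar>real_of_int k\<bar> \<le> \<bar>real_of_int k - 2 ^ j * x0\<bar> + 2 ^ j * \<bar>x0\<bar>"
    using abs_triangle_ineq[of "real_of_int k - 2 ^ j * x0" "2 ^ j * x0"] by (simp add: abs_mult)
  also have "\<dots> \<le> 2 ^ j * (\<bar>x0\<bar> + 1)"
    using assms(1) by (simp add: loc_dom_def algebra_simps)
  also have "\<dots> \<le> 2 ^ N * (\<bar>x0\<bar> + 1)"
    using assms(2) by (intro mult_right_mono) (auto intro: power_increasing)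
  finally show ?thesis by linarith
qed

lemma finite_loc_dom_below: "finite {p \<in> loc_dom x0. fst p < N}"
proof (rule finite_subset)
  let ?b = "\<lceil>2 ^ N * (\<bar>x0\<bar> + 1)\<rceil>"
  show "{p \<in> loc_dom x0. fst p < N} \<subseteq> {..<N} \<times> {-?b..?b}"
    using loc_dom_abs_bound[where N = N] by (fastforce simp: abs_le_iff)
qed simp

lemma finite_loc_dom_slice: "finite {k. (j, k) \<in> loc_dom x0}"
proof -
  have "{k. (j, k) \<in> loc_dom x0} \<subseteq> snd ` {p \<in> loc_dom x0. fst p < Suc j}"
    by (force simp: image_iff)
  then show ?thesis using finite_loc_dom_below finite_surj by blast
qed

lemma floor_in_loc_dom: "(j, \<lfloor>2 ^ j * x0\<rfloor>) \<in> loc_dom x0"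
proof -
  have "\<bar>real_of_int \<lfloor>2 ^ j * x0\<rfloor> - 2 ^ j * x0\<bar> < 1"
    by (smt (verit) of_int_floor_le real_of_int_floor_gt_diff_one)
  also have "(1::real) \<le> 2 ^ j" by simp
  finally show ?thesis by (simp add: loc_dom_def)
qed

lemma I_set_witness:
  assumes "j > 0" "j \<in> \<Lambda> m" "0 \<le> r m" "r m < 1"
  shows "\<exists>k. (j, k) \<in> I_set x0 \<Lambda> r \<and>
    \<lfloor>\<bar>real_of_int k - 2 ^ j * x0\<bar>\<rfloor> = \<lfloor>2 powr (real j * r m)\<rfloor>"
proof -
  define N where "N = \<lfloor>2 powr (real j * r m)\<rfloor>"
  define k where "k = \<lceil>2 ^ j * x0 + real_of_int N\<rceil>"
  have "1 \<le> 2 powr (real j * r m)" using assms(3) by (intro ge_one_powr_ge_zero) auto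
  then have N_pos: "N \<ge> 1" unfolding N_def by (simp add: le_floor_iff)
  have "2 powr (real j * r m) < 2 powr real j"
    using assms(1,4) by simp
  then have "N < 2 ^ j" unfolding N_def floor_less_iff by (simp add: powr_realpow)
  then have N_small: "real_of_int N + 1 \<le> 2 ^ j"
    by (metis int_less_real_le of_int_numeral of_int_power)
  have k_lo: "real_of_int N \<le> real_of_int k - 2 ^ j * x0" unfolding k_def by linarith
  have k_hi: "real_of_int k - 2 ^ j * x0 < real_of_int N + 1" unfolding k_def by linarith
  have dist: "\<bar>real_of_int k - 2 ^ j * x0\<bar> = real_of_int k - 2 ^ j * x0"
    using k_lo N_pos by simp
  have "\<lfloor>\<bar>real_of_int k - 2 ^ j * x0\<bar>\<rfloor> = N"
    unfolding dist using k_lo k_hi by (simp add: floor_eq_iff)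
  moreover have "(j, k) \<in> loc_dom x0" unfolding loc_dom_def using dist k_hi N_small by simp
  ultimately show ?thesis unfolding I_set_def N_def using assms(2) by blast
qed

lemma log_floor_eq_approx:
  fixes z \<rho> :: real
  assumes "j > 0" "0 \<le> \<rho>" "z \<ge> 0" "\<lfloor>z\<rfloor> = \<lfloor>2 powr (real j * \<rho>)\<rfloor>"
  shows "\<bar>log 2 (1 + z) / real j - \<rho>\<bar> \<le> 2 / real j"
proof -
  define y where "y = 2 powr (real j * \<rho>)"
  have y_ge: "y \<ge> 1" unfolding y_def using assms by (intro ge_one_powr_ge_zero) auto
  have "\<bar>z - y\<bar> < 1" using assms(4) unfolding y_def
    by (smt (verit, best) floor_eq_iff of_int_floor_le real_of_int_floor_gt_diff_one)
  then have "y < 1 + z" "1 + z \<le> 2 ^ 2 * y" using y_ge by auto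
  then have "log 2 y < log 2 (1 + z)" "log 2 (1 + z) \<le> log 2 (2 ^ 2 * y)"
    using y_ge assms(3) by (simp_all only: log_less_cancel_iff log_le_cancel_iff)
  moreover have "log 2 (2 ^ 2 * y) = 2 + log 2 y"
    using y_ge log_pow_cancel[of 2 2] by (simp add: log_mult)
  moreover have "log 2 y = real j * \<rho>" unfolding y_def by simp
  ultimately have "\<bar>log 2 (1 + z) - real j * \<rho>\<bar> \<le> 2" by linarith
  moreover have "log 2 (1 + z) / real j - \<rho> = (log 2 (1 + z) - real j * \<rho>) / real j"
    using assms(1) by (simp add: field_simps)
  ultimately show ?thesis using assms(1) by (simp add: abs_divide divide_right_mono)
qed

section \<open>Regularity below the frontier\<close>

lemma loc_dom_slice_maximizer:
  fixes P :: "nat \<Rightarrow> int \<Rightarrow> real"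
  obtains kk where "\<And>j. (j, kk j) \<in> loc_dom x0"
    "\<And>j k. (j, k) \<in> loc_dom x0 \<Longrightarrow> P j k \<le> P j (kk j)"
proof -
  have "\<forall>j. \<exists>k. (j, k) \<in> loc_dom x0 \<and> (\<forall>k'. (j, k') \<in> loc_dom x0 \<longrightarrow> P j k' \<le> P j k)"
  proof
    fix j
    let ?K = "{k. (j, k) \<in> loc_dom x0}"
    have fin: "finite (P j ` ?K)" using finite_loc_dom_slice by simp
    have "P j ` ?K \<noteq> {}" using floor_in_loc_dom by blast
    then have "Max (P j ` ?K) \<in> P j ` ?K" using fin by (rule Max_in[rotated])
    then obtain k where "k \<in> ?K" "P j k = Max (P j ` ?K)" by (auto simp del: Max_in)
    with fin show "\<exists>k. (j, k) \<in> loc_dom x0 \<and> (\<forall>k'. (j, k') \<in> loc_dom x0 \<longrightarrow> P j k' \<le> P j k)"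
      by auto
  qed
  from choice[OF this] obtain kk where
    "\<forall>j. (j, kk j) \<in> loc_dom x0 \<and> (\<forall>k. (j, k) \<in> loc_dom x0 \<longrightarrow> P j k \<le> P j (kk j))" ..
  then show ?thesis by (intro that) auto
qed

lemma loc_dom_bounded_if_eventually_bounded:
  fixes P :: "nat \<Rightarrow> int \<Rightarrow> real"
  assumes "\<And>j k. (j, k) \<in> loc_dom x0 \<Longrightarrow> N \<le> j \<Longrightarrow> P j k \<le> B"
  obtains Q where "Q > 0" "\<And>j k. (j, k) \<in> loc_dom x0 \<Longrightarrow> P j k \<le> Q"
proof
  define F where "F = {p \<in> loc_dom x0. fst p < N}"
  show "1 + \<bar>B\<bar> + (\<Sum>p\<in>F. \<bar>P (fst p) (snd p)\<bar>) > 0"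
    by (simp add: add_pos_nonneg sum_nonneg)
  fix j k assume jk: "(j, k) \<in> loc_dom x0"
  have "P j k \<le> \<bar>B\<bar> + (\<Sum>p\<in>F. \<bar>P (fst p) (snd p)\<bar>)"
  proof (cases "N \<le> j")
    case True
    then show ?thesis using assms[OF jk] by (simp add: add_increasing2 sum_nonneg)
  next
    case False
    then have "(j, k) \<in> F" using jk unfolding F_def by simp
    then have "\<bar>P j k\<bar> \<le> (\<Sum>p\<in>F. \<bar>P (fst p) (snd p)\<bar>)"
      using member_le_sum[of "(j, k)" F "\<lambda>p. \<bar>P (fst p) (snd p)\<bar>"] finite_loc_dom_below
      unfolding F_def by fastforce
    then show ?thesis by linarith
  qed
  then show "P j k \<le> 1 + \<bar>B\<bar> + (\<Sum>p\<in>F. \<bar>P (fst p) (snd p)\<bar>)" by simp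
qed

lemma log_average_less_imp_powr_less:
  fixes a b C \<epsilon> :: real
  assumes "j > 0" "a > 0" "b > 0" "log 2 a / real j + C * (log 2 b / real j) < \<epsilon>"
  shows "a * b powr C < 2 powr (real j * \<epsilon>)"
proof -
  have "log 2 (a * b powr C) = log 2 a + C * log 2 b"
    using assms(2,3) by (simp add: log_mult log_powr)
  also have "\<dots> < real j * \<epsilon>"
    using assms(1,4) by (simp add: add_divide_distrib[symmetric] divide_less_eq mult.commute)
  finally show ?thesis using assms(2,3) by (simp add: log_less_iff)
qed

text \<open>Uniformity in \<open>k\<close> comes from applying condition (i) to a maximizing \<open>k\<close> in each slice.\<close>
lemma subexponential_bound:
  fixes Cc lam :: "nat \<Rightarrow> int \<Rightarrow> real" and C \<epsilon> :: real
  assumes Cc_pos: "\<And>j k. (j, k) \<in> loc_dom x0 \<Longrightarrow> Cc j k > 0"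
    and lam_pos: "\<And>j k. (j, k) \<in> loc_dom x0 \<Longrightarrow> lam j k > 0"
    and cond_i: "\<And>kk. (\<forall>j. (j, kk j) \<in> loc_dom x0) \<Longrightarrow>
        limsup (\<lambda>j. ereal (log 2 (Cc j (kk j)) / real j + C * (log 2 (lam j (kk j)) / real j))) \<le> 0"
    and "\<epsilon> > 0"
  shows "\<exists>Q>0. \<forall>j k. (j, k) \<in> loc_dom x0 \<longrightarrow> Cc j k * lam j k powr C \<le> Q * 2 powr (real j * \<epsilon>)"
proof -
  define P where "P j k = Cc j k * lam j k powr C * 2 powr (- real j * \<epsilon>)" for j k
  obtain kk where kk: "\<And>j. (j, kk j) \<in> loc_dom x0"
    "\<And>j k. (j, k) \<in> loc_dom x0 \<Longrightarrow> P j k \<le> P j (kk j)"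
    using loc_dom_slice_maximizer by blast
  have "\<forall>j. (j, kk j) \<in> loc_dom x0" using kk(1) by blast
  then have "limsup (\<lambda>j. ereal (log 2 (Cc j (kk j)) / real j + C * (log 2 (lam j (kk j)) / real j)))
      < ereal \<epsilon>"
    using cond_i \<open>\<epsilon> > 0\<close> by (meson ereal_less(2) le_less_trans zero_less_real_of_ereal)
  from Limsup_lessD[OF this] obtain N where N: "\<And>j. N \<le> j \<Longrightarrow>
      log 2 (Cc j (kk j)) / real j + C * (log 2 (lam j (kk j)) / real j) < \<epsilon>"
    by (auto simp: eventually_sequentially)
  have "P j k \<le> 1" if "(j, k) \<in> loc_dom x0" "max N 1 \<le> j" for j k
  proof -
    have "Cc j (kk j) * lam j (kk j) powr C < 2 powr (real j * \<epsilon>)"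
      using that(2) N[of j] Cc_pos lam_pos kk(1)
      by (intro log_average_less_imp_powr_less) auto
    then have "P j (kk j) < 1"
      unfolding P_def by (simp add: powr_minus_divide divide_less_eq)
    then show ?thesis using kk(2)[OF that(1)] by simp
  qed
  then obtain Q where Q: "Q > 0" "\<And>j k. (j, k) \<in> loc_dom x0 \<Longrightarrow> P j k \<le> Q"
    using loc_dom_bounded_if_eventually_bounded[of x0 "max N 1" P 1] by blast
  then show ?thesis by (auto simp: P_def powr_minus_divide divide_le_eq)
qed

lemma linear_exponent_gap:
  fixes J t a \<delta> :: real
  assumes "0 \<le> J" "0 \<le> t" "t \<le> J + 1" "0 < a" "0 < \<delta>"
  shows "- J * a + (a - \<delta>) * t \<le> \<bar>a - \<delta>\<bar> - J * min a \<delta>"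
proof (cases "\<delta> \<le> a")
  case True
  have "(a - \<delta>) * t \<le> (a - \<delta>) * (J + 1)" using True assms by (intro mult_left_mono) auto
  then show ?thesis using True by (simp add: algebra_simps min_def)
next
  case False
  have "(a - \<delta>) * t \<le> 0" using False assms by (simp add: mult_nonpos_nonneg)
  then show ?thesis using False by (simp add: algebra_simps min_def)
qed

lemma shifted_term_bound:
  fixes J D l s \<sigma> \<delta> v :: real
  assumes "0 \<le> J" "1 \<le> D" "D \<le> 2 powr (J + 1)" "0 < l" "0 < \<delta>" "s < v"
  shows "2 powr (- J * v) * (D / l) powr (v - (\<sigma> + \<delta>))
    \<le> l powr (\<sigma> + \<delta> - v) * 2 powr \<bar>v - s - \<delta>\<bar> * 2 powr (- J * min (v - s) \<delta>)
       * (2 powr (- J * s) * D powr (- (\<sigma> - s)))"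
proof -
  define t where "t = log 2 D"
  define u where "u = log 2 l"
  have D_eq: "D = 2 powr t" and l_eq: "l = 2 powr u"
    using assms(2,4) by (simp_all add: t_def u_def)
  have "0 \<le> t" "t \<le> J + 1"
    using assms(2,3) by (simp_all add: t_def log_le_iff)
  then have gap: "- J * (v - s) + (v - s - \<delta>) * t \<le> \<bar>v - s - \<delta>\<bar> - J * min (v - s) \<delta>"
    using linear_exponent_gap assms by simp
  have "D / l = 2 powr (t - u)" unfolding D_eq l_eq by (simp add: powr_diff)
  then have "2 powr (- J * v) * (D / l) powr (v - (\<sigma> + \<delta>))
      = 2 powr (- J * v + (t - u) * (v - (\<sigma> + \<delta>)))"
    by (simp add: powr_powr powr_add[symmetric])
  also have "\<dots> \<le> 2 powr (u * (\<sigma> + \<delta> - v) + \<bar>v - s - \<delta>\<bar> + - J * min (v - s) \<delta>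
      + (- J * s + t * (- (\<sigma> - s))))"
    using gap by (simp add: algebra_simps)
  also have "\<dots> = l powr (\<sigma> + \<delta> - v) * 2 powr \<bar>v - s - \<delta>\<bar> * 2 powr (- J * min (v - s) \<delta>)
       * (2 powr (- J * s) * D powr (- (\<sigma> - s)))"
    unfolding D_eq l_eq by (simp add: powr_powr powr_add[symmetric] algebra_simps)
  finally show ?thesis .
qed

lemma frontier_lower_bound:
  fixes x0 s \<sigma> :: real and S :: "real \<Rightarrow> real" and Cc lam c :: "nat \<Rightarrow> int \<Rightarrow> real"
  assumes S_cont: "isCont S \<sigma>"
    and Cc_pos: "\<And>j k. (j, k) \<in> loc_dom x0 \<Longrightarrow> Cc j k > 0"
    and lam_pos: "\<And>j k. (j, k) \<in> loc_dom x0 \<Longrightarrow> lam j k > 0"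
    and cond_i: "\<And>C kk. (\<forall>j. (j, kk j) \<in> loc_dom x0) \<Longrightarrow>
        limsup (\<lambda>j. ereal (log 2 (Cc j (kk j)) / real j + C * (log 2 (lam j (kk j)) / real j))) \<le> 0"
    and c_bound: "\<And>j k. (j, k) \<in> loc_dom x0 \<Longrightarrow>
        \<bar>c j k\<bar> \<le> Cc j k * (INF \<sigma>. 2 powr (- real j * S \<sigma>) *
            ((1 + \<bar>real_of_int k - 2 ^ j * x0\<bar>) / lam j k) powr (S \<sigma> - \<sigma>))"
    and below: "s < S \<sigma>"
  shows "two_microlocal x0 c s (\<sigma> - s)"
proof -
  obtain \<delta> where \<delta>: "0 < \<delta>" "s < S (\<sigma> + \<delta>)"
  proof -
    have "eventually (\<lambda>y. s < S y) (at \<sigma>)"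
      using S_cont below by (simp add: isCont_def order_tendstoD(1))
    then obtain d where "0 < d" "\<And>y. y \<noteq> \<sigma> \<Longrightarrow> dist y \<sigma> < d \<Longrightarrow> s < S y"
      by (auto simp: eventually_at)
    then show thesis using that[of "d / 2"] by (simp add: dist_real_def)
  qed
  define v where "v = S (\<sigma> + \<delta>)"
  define \<epsilon> where "\<epsilon> = min (v - s) \<delta>"
  define B where "B = \<bar>v - s - \<delta>\<bar>"
  have "\<epsilon> > 0" using \<delta> unfolding \<epsilon>_def v_def by simp
  with Cc_pos lam_pos cond_i have "\<exists>Q>0. \<forall>j k. (j, k) \<in> loc_dom x0 \<longrightarrow>
      Cc j k * lam j k powr (\<sigma> + \<delta> - v) \<le> Q * 2 powr (real j * \<epsilon>)"
    by (rule subexponential_bound)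
  then obtain Q where Q: "Q > 0" "\<And>j k. (j, k) \<in> loc_dom x0 \<Longrightarrow>
      Cc j k * lam j k powr (\<sigma> + \<delta> - v) \<le> Q * 2 powr (real j * \<epsilon>)"
    by blast
  have "\<bar>c j k\<bar>
      \<le> Q * 2 powr B * 2 powr (- real j * s) * (1 + \<bar>real_of_int k - 2 ^ j * x0\<bar>) powr (- (\<sigma> - s))"
    if jk: "(j, k) \<in> loc_dom x0" for j k
  proof -
    define D where "D = 1 + \<bar>real_of_int k - 2 ^ j * x0\<bar>"
    define R where "R = 2 powr (- real j * s) * D powr (- (\<sigma> - s))"
    have "D \<le> 2 powr (real j + 1)"
      using jk by (simp add: D_def loc_dom_def powr_add powr_realpow)
        (use one_le_power[of "2::real" j] in linarith)
    then have T: "2 powr (- real j * v) * (D / lam j k) powr (v - (\<sigma> + \<delta>))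
        \<le> lam j k powr (\<sigma> + \<delta> - v) * 2 powr B * 2 powr (- real j * \<epsilon>) * R"
      using shifted_term_bound[of "real j" D "lam j k" \<delta> s v \<sigma>] lam_pos[OF jk] \<delta>
      unfolding B_def \<epsilon>_def R_def D_def v_def by simp
    have "(INF \<sigma>. 2 powr (- real j * S \<sigma>) * (D / lam j k) powr (S \<sigma> - \<sigma>))
        \<le> 2 powr (- real j * v) * (D / lam j k) powr (v - (\<sigma> + \<delta>))"
      unfolding v_def by (rule cINF_lower) (auto intro!: bdd_belowI[where m = 0])
    with c_bound[OF jk] Cc_pos[OF jk]
    have "\<bar>c j k\<bar> \<le> Cc j k * (2 powr (- real j * v) * (D / lam j k) powr (v - (\<sigma> + \<delta>)))"
      unfolding D_def by (meson mult_left_mono order_trans less_imp_le)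
    also have "\<dots> \<le> (Cc j k * lam j k powr (\<sigma> + \<delta> - v)) * 2 powr (- real j * \<epsilon>) * (2 powr B * R)"
      using mult_left_mono[OF T, of "Cc j k"] Cc_pos[OF jk] by (simp add: ac_simps)
    also have "\<dots> \<le> Q * 2 powr (real j * \<epsilon>) * 2 powr (- real j * \<epsilon>) * (2 powr B * R)"
      using Q(2)[OF jk] by (intro mult_right_mono) (auto simp: R_def)
    also have "\<dots> = Q * 2 powr B * R"
      by (simp add: powr_add[symmetric])
    finally show ?thesis unfolding R_def D_def by (simp add: ac_simps)
  qed
  then show ?thesis unfolding two_microlocal_def using Q(1) by (intro exI[of _ "Q * 2 powr B"]) auto
qed

section \<open>No regularity above the frontier\<close>

lemma dual_bound_Lipschitz_near:
  fixes S S' S'' :: "real \<Rightarrow> real" and \<sigma> :: real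
  assumes S_deriv: "\<And>x. (S has_real_derivative S' x) (at x)"
    and S'_deriv: "\<And>x. (S' has_real_derivative S'' x) (at x)"
    and S''_neg: "\<And>x. S'' x < 0"
    and S'_neg: "\<And>x. S' x < 0"
  defines "\<alpha> \<equiv> dual_slope (S' \<sigma>)"
  obtains K w where "0 \<le> K" "0 < w"
    "\<And>\<beta> y. \<bar>\<beta> - \<alpha>\<bar> \<le> w \<Longrightarrow> (1 - \<beta>) * S y + \<beta> * y \<le> (1 - \<alpha>) * S \<sigma> + \<alpha> * \<sigma> + K * \<bar>\<beta> - \<alpha>\<bar>"
proof -
  define M where "M \<tau> = (1 - dual_slope (S' \<tau>)) * S \<tau> + dual_slope (S' \<tau>) * \<tau>" for \<tau>
  define a where "a = dual_slope (S' (\<sigma> - 1))"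
  define b where "b = dual_slope (S' (\<sigma> + 1))"
  have max: "(1 - dual_slope (S' \<tau>)) * S y + dual_slope (S' \<tau>) * y \<le> M \<tau>" for \<tau> y
    unfolding M_def by (rule dual_slope_max[OF S_deriv S'_deriv S''_neg S'_neg])
  have a\<alpha>: "a < \<alpha>" and \<alpha>b: "\<alpha> < b"
    unfolding a_def b_def \<alpha>_def
    using deriv_neg_imp_strict_decreasing[OF S'_deriv S''_neg]
    by (auto intro!: dual_slope_strict_antimono S'_neg)
  define K where "K = \<bar>M (\<sigma> + 1) - M \<sigma>\<bar> / (b - \<alpha>) + \<bar>M (\<sigma> - 1) - M \<sigma>\<bar> / (\<alpha> - a)"
  show ?thesis
  proof (rule that)
    show "0 \<le> K" "0 < min (\<alpha> - a) (b - \<alpha>)" using a\<alpha> \<alpha>b by (simp_all add: K_def)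
    fix \<beta> y assume "\<bar>\<beta> - \<alpha>\<bar> \<le> min (\<alpha> - a) (b - \<alpha>)"
    from affine_le_Lipschitz_near[OF a\<alpha> \<alpha>b max[of "\<sigma> - 1" y, folded a_def]
        max[of \<sigma> y, folded \<alpha>_def] max[of "\<sigma> + 1" y, folded b_def] this]
    show "(1 - \<beta>) * S y + \<beta> * y \<le> (1 - \<alpha>) * S \<sigma> + \<alpha> * \<sigma> + K * \<bar>\<beta> - \<alpha>\<bar>"
      by (simp add: K_def M_def \<alpha>_def)
  qed
qed

lemma I_set_sequence:
  fixes r :: "nat \<Rightarrow> real"
  assumes "infinite (\<Lambda> m)" "0 \<le> r m" "r m < 1"
  obtains jj kk where "filterlim jj at_top sequentially" "\<And>n. 0 < jj n"
    "\<And>n. (jj n, kk n) \<in> I_set x0 \<Lambda> r"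
    "(\<lambda>n. log 2 (1 + \<bar>real_of_int (kk n) - 2 ^ jj n * x0\<bar>) / real (jj n)) \<longlonglongrightarrow> r m"
proof -
  define jj where "jj n = enumerate (\<Lambda> m) (Suc n)" for n
  have "strict_mono jj"
    unfolding jj_def using strict_mono_enumerate[OF assms(1)] by (simp add: strict_mono_def)
  then have jj_lim: "filterlim jj at_top sequentially" by (rule filterlim_subseq)
  have jj_pos: "0 < jj n" for n
    unfolding jj_def using enumerate_mono[OF zero_less_Suc assms(1)] by (metis gr0I not_less0)
  have "jj n \<in> \<Lambda> m" for n unfolding jj_def by (rule enumerate_in_set[OF assms(1)])
  from I_set_witness[where r = r and m = m and \<Lambda> = \<Lambda>, OF jj_pos this assms(2,3)]
  have "\<forall>n. \<exists>k. (jj n, k) \<in> I_set x0 \<Lambda> r \<and>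
      \<lfloor>\<bar>real_of_int k - 2 ^ jj n * x0\<bar>\<rfloor> = \<lfloor>2 powr (real (jj n) * r m)\<rfloor>" by blast
  then obtain kk where kk: "\<And>n. (jj n, kk n) \<in> I_set x0 \<Lambda> r"
    "\<And>n. \<lfloor>\<bar>real_of_int (kk n) - 2 ^ jj n * x0\<bar>\<rfloor> = \<lfloor>2 powr (real (jj n) * r m)\<rfloor>"
    by metis
  have "filterlim (\<lambda>n. real (jj n)) at_top sequentially"
    using filterlim_compose[OF filterlim_real_sequentially jj_lim] .
  then have "(\<lambda>n. 2 / real (jj n)) \<longlonglongrightarrow> 0"
    by (intro tendsto_divide_0[OF tendsto_const] filterlim_at_top_imp_at_infinity)
  then have "(\<lambda>n. log 2 (1 + \<bar>real_of_int (kk n) - 2 ^ jj n * x0\<bar>) / real (jj n) - r m) \<longlonglongrightarrow> 0"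
    by (rule Lim_null_comparison[rotated])
       (use log_floor_eq_approx jj_pos kk(2) assms(2) in \<open>auto intro!: always_eventually\<close>)
  then show ?thesis using that[OF jj_lim jj_pos kk(1)] by (simp add: LIM_zero_iff)
qed

lemma exact_coefficient_exponent_bound:
  fixes S :: "real \<Rightarrow> real" and J Cc l C0 D c s \<sigma> \<beta> M :: real
  assumes "0 < J" "0 < Cc" "0 < l" "0 < C0" "1 \<le> D"
    and exact: "\<bar>c\<bar> = Cc * (INF x. 2 powr (- J * S x) * (D / l) powr (S x - x))"
    and bound: "\<bar>c\<bar> \<le> C0 * 2 powr (- J * s) * D powr (- (\<sigma> - s))"
    and slope: "\<beta> = (log 2 D - log 2 l) / J"
    and dual: "\<And>y. (1 - \<beta>) * S y + \<beta> * y \<le> M"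
  shows "log 2 Cc / J - log 2 C0 / J - (s - \<sigma>) * (log 2 D / J) \<le> M - s"
proof -
  have "D / l = 2 powr (J * \<beta>)"
    using assms(1,3,5) by (simp add: slope powr_diff)
  then have scale_term: "2 powr (- J * S y) * (D / l) powr (S y - y)
      = 2 powr (- J * ((1 - \<beta>) * S y + \<beta> * y))" for y
    by (simp add: powr_powr powr_add[symmetric] algebra_simps)
  have "2 powr (- J * M) \<le> (INF x. 2 powr (- J * S x) * (D / l) powr (S x - x))"
    unfolding scale_term using dual \<open>0 < J\<close> by (intro cINF_greatest) auto
  then have "Cc * 2 powr (- J * M) \<le> \<bar>c\<bar>"
    unfolding exact by (rule mult_left_mono) (use \<open>0 < Cc\<close> in simp)
  also note bound
  finally have "Cc * 2 powr (- J * M) \<le> C0 * 2 powr (- J * s) * D powr (- (\<sigma> - s))" .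
  then have "log 2 (Cc * 2 powr (- J * M)) \<le> log 2 (C0 * 2 powr (- J * s) * D powr (- (\<sigma> - s)))"
    using assms(2,4,5) by (subst log_le_cancel_iff) auto
  then have "log 2 Cc - J * M \<le> log 2 C0 - J * s - (\<sigma> - s) * log 2 D"
    using assms(2,4,5) by (simp add: log_mult log_powr algebra_simps)
  then have "(log 2 Cc - J * M) / J \<le> (log 2 C0 - J * s - (\<sigma> - s) * log 2 D) / J"
    using \<open>0 < J\<close> by (simp add: divide_right_mono)
  then show ?thesis
    using \<open>0 < J\<close> by (simp add: add_divide_distrib diff_divide_distrib algebra_simps)
qed

lemma exponent_bound_along_I:
  fixes x0 s \<sigma> \<delta> M :: real and S :: "real \<Rightarrow> real" and \<Lambda> :: "nat \<Rightarrow> nat set"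
    and r :: "nat \<Rightarrow> real" and Cc lam c :: "nat \<Rightarrow> int \<Rightarrow> real"
  assumes Lam_inf: "infinite (\<Lambda> m)" and r_range: "0 \<le> r m" "r m < 1"
    and Cc_pos: "\<And>j k. (j, k) \<in> loc_dom x0 \<Longrightarrow> Cc j k > 0"
    and lam_pos: "\<And>j k. (j, k) \<in> loc_dom x0 \<Longrightarrow> lam j k > 0"
    and cond_ii: "\<And>jj kk. filterlim jj at_top sequentially \<Longrightarrow>
        (\<forall>n. (jj n, kk n) \<in> I_set x0 \<Lambda> r) \<Longrightarrow>
        ((\<lambda>n. log 2 (Cc (jj n) (kk n)) / real (jj n)) \<longlonglongrightarrow> 0) \<and>
        ((\<lambda>n. log 2 (lam (jj n) (kk n)) / real (jj n)) \<longlonglongrightarrow> 0)"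
    and c_eq: "\<And>j k. (j, k) \<in> I_set x0 \<Lambda> r \<Longrightarrow>
        \<bar>c j k\<bar> = Cc j k * (INF \<sigma>. 2 powr (- real j * S \<sigma>) *
            ((1 + \<bar>real_of_int k - 2 ^ j * x0\<bar>) / lam j k) powr (S \<sigma> - \<sigma>))"
    and regular: "two_microlocal x0 c s (\<sigma> - s)"
    and "0 < \<delta>"
    and dual: "\<And>\<beta> y. \<bar>\<beta> - r m\<bar> < \<delta> \<Longrightarrow> (1 - \<beta>) * S y + \<beta> * y \<le> M"
  shows "s * (1 - r m) + \<sigma> * r m \<le> M"
proof -
  obtain jj kk where jj: "filterlim jj at_top sequentially" "\<And>n. 0 < jj n"
    and I: "\<And>n. (jj n, kk n) \<in> I_set x0 \<Lambda> r"
    and \<gamma>_lim: "(\<lambda>n. log 2 (1 + \<bar>real_of_int (kk n) - 2 ^ jj n * x0\<bar>) / real (jj n)) \<longlonglongrightarrow> r m"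
    using I_set_sequence[where \<Lambda> = \<Lambda> and r = r and m = m, OF Lam_inf r_range] by blast
  have dom: "(jj n, kk n) \<in> loc_dom x0" for n using I[of n] unfolding I_set_def by blast
  have Cc_lim: "(\<lambda>n. log 2 (Cc (jj n) (kk n)) / real (jj n)) \<longlonglongrightarrow> 0"
    and lam_lim: "(\<lambda>n. log 2 (lam (jj n) (kk n)) / real (jj n)) \<longlonglongrightarrow> 0"
    using cond_ii[OF jj(1)] I by auto
  obtain C0 where C0: "C0 > 0" "\<And>j k. (j, k) \<in> loc_dom x0 \<Longrightarrow>
      \<bar>c j k\<bar> \<le> C0 * 2 powr (- real j * s) * (1 + \<bar>real_of_int k - 2 ^ j * x0\<bar>) powr (- (\<sigma> - s))"
    using regular unfolding two_microlocal_def by blast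
  define D where "D n = 1 + \<bar>real_of_int (kk n) - 2 ^ jj n * x0\<bar>" for n
  define \<beta> where "\<beta> n = (log 2 (D n) - log 2 (lam (jj n) (kk n))) / real (jj n)" for n
  define F where "F n = log 2 (Cc (jj n) (kk n)) / real (jj n) - log 2 C0 / real (jj n)
      - (s - \<sigma>) * (log 2 (D n) / real (jj n))" for n
  have "filterlim (\<lambda>n. real (jj n)) at_top sequentially"
    using filterlim_compose[OF filterlim_real_sequentially jj(1)] .
  then have C0_lim: "(\<lambda>n. log 2 C0 / real (jj n)) \<longlonglongrightarrow> 0"
    by (intro tendsto_divide_0[OF tendsto_const] filterlim_at_top_imp_at_infinity)
  have "\<beta> \<longlonglongrightarrow> r m - 0"
    unfolding \<beta>_def diff_divide_distrib D_def by (intro tendsto_diff \<gamma>_lim lam_lim)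
  then have "eventually (\<lambda>n. \<bar>\<beta> n - r m\<bar> < \<delta>) sequentially"
    using \<open>0 < \<delta>\<close> by (auto dest: tendstoD simp: dist_real_def)
  then have "eventually (\<lambda>n. F n \<le> M - s) sequentially"
  proof (rule eventually_mono)
    fix n assume close: "\<bar>\<beta> n - r m\<bar> < \<delta>"
    show "F n \<le> M - s"
      unfolding F_def
    proof (rule exact_coefficient_exponent_bound[where S = S and l = "lam (jj n) (kk n)"
          and c = "c (jj n) (kk n)" and \<beta> = "\<beta> n"])
      show "\<bar>c (jj n) (kk n)\<bar> = Cc (jj n) (kk n) *
          (INF x. 2 powr (- real (jj n) * S x) * (D n / lam (jj n) (kk n)) powr (S x - x))"
        using c_eq[OF I] by (simp add: D_def)
      show "\<bar>c (jj n) (kk n)\<bar> \<le> C0 * 2 powr (- real (jj n) * s) * D n powr (- (\<sigma> - s))"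
        using C0(2)[OF dom] by (simp add: D_def)
      show "(1 - \<beta> n) * S y + \<beta> n * y \<le> M" for y using dual[OF close] .
    qed (use jj(2) Cc_pos lam_pos dom C0(1) in \<open>auto simp: D_def \<beta>_def\<close>)
  qed
  moreover have "F \<longlonglongrightarrow> 0 - 0 - (s - \<sigma>) * r m"
    unfolding F_def D_def by (intro tendsto_diff tendsto_mult Cc_lim C0_lim tendsto_const \<gamma>_lim)
  ultimately have "0 - 0 - (s - \<sigma>) * r m \<le> M - s"
    by (intro tendsto_upperbound) auto
  then show ?thesis by (simp add: algebra_simps)
qed

lemma frontier_upper_bound:
  fixes x0 s \<sigma> :: real and S S' S'' :: "real \<Rightarrow> real" and \<Lambda> :: "nat \<Rightarrow> nat set"
    and r :: "nat \<Rightarrow> real" and Cc lam c :: "nat \<Rightarrow> int \<Rightarrow> real"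
  assumes S_deriv: "\<And>x. (S has_real_derivative S' x) (at x)"
    and S'_deriv: "\<And>x. (S' has_real_derivative S'' x) (at x)"
    and S''_neg: "\<And>x. S'' x < 0"
    and S'_neg: "\<And>x. S' x < 0"
    and Lam_inf: "\<And>m. infinite (\<Lambda> m)"
    and r_sub: "range r \<subseteq> dual_slope ` range S'"
    and r_dense: "dual_slope ` range S' \<subseteq> closure (range r)"
    and Cc_pos: "\<And>j k. (j, k) \<in> loc_dom x0 \<Longrightarrow> Cc j k > 0"
    and lam_pos: "\<And>j k. (j, k) \<in> loc_dom x0 \<Longrightarrow> lam j k > 0"
    and cond_ii: "\<And>jj kk. filterlim jj at_top sequentially \<Longrightarrow>
        (\<forall>n. (jj n, kk n) \<in> I_set x0 \<Lambda> r) \<Longrightarrow>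
        ((\<lambda>n. log 2 (Cc (jj n) (kk n)) / real (jj n)) \<longlonglongrightarrow> 0) \<and>
        ((\<lambda>n. log 2 (lam (jj n) (kk n)) / real (jj n)) \<longlonglongrightarrow> 0)"
    and c_eq: "\<And>j k. (j, k) \<in> I_set x0 \<Lambda> r \<Longrightarrow>
        \<bar>c j k\<bar> = Cc j k * (INF \<sigma>. 2 powr (- real j * S \<sigma>) *
            ((1 + \<bar>real_of_int k - 2 ^ j * x0\<bar>) / lam j k) powr (S \<sigma> - \<sigma>))"
    and regular: "two_microlocal x0 c s (\<sigma> - s)"
  shows "s \<le> S \<sigma>"
proof -
  define \<alpha> where "\<alpha> = dual_slope (S' \<sigma>)"
  define M where "M = (1 - \<alpha>) * S \<sigma> + \<alpha> * \<sigma>"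
  obtain K w where K: "0 \<le> K" and "0 < w" and near:
    "\<And>\<beta> y. \<bar>\<beta> - \<alpha>\<bar> \<le> w \<Longrightarrow> (1 - \<beta>) * S y + \<beta> * y \<le> M + K * \<bar>\<beta> - \<alpha>\<bar>"
    using dual_bound_Lipschitz_near[OF S_deriv S'_deriv S''_neg S'_neg]
    unfolding M_def \<alpha>_def by blast
  have approx: "s * (1 - \<alpha>) + \<sigma> * \<alpha> \<le> M + (2 * K + \<bar>s - \<sigma>\<bar>) * \<delta>"
    if "0 < \<delta>" "2 * \<delta> \<le> w" for \<delta>
  proof -
    have "\<alpha> \<in> closure (range r)" using r_dense unfolding \<alpha>_def by blast
    then obtain m where m: "\<bar>r m - \<alpha>\<bar> < \<delta>"
      using \<open>0 < \<delta>\<close> unfolding closure_approachable dist_real_def by blast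
    from r_sub obtain \<tau> where "r m = dual_slope (S' \<tau>)" by blast
    then have r_range: "0 \<le> r m" "r m < 1" using dual_slope_bounds[OF S'_neg[of \<tau>]] by auto
    have "s * (1 - r m) + \<sigma> * r m \<le> M + K * (2 * \<delta>)"
    proof (rule exponent_bound_along_I[where \<Lambda> = \<Lambda> and r = r and m = m,
          OF Lam_inf r_range Cc_pos lam_pos cond_ii c_eq regular \<open>0 < \<delta>\<close>])
      fix \<beta> y assume "\<bar>\<beta> - r m\<bar> < \<delta>"
      then have close: "\<bar>\<beta> - \<alpha>\<bar> \<le> 2 * \<delta>" using m by linarith
      with that(2) have "(1 - \<beta>) * S y + \<beta> * y \<le> M + K * \<bar>\<beta> - \<alpha>\<bar>"
        by (intro near) simp
      also have "\<dots> \<le> M + K * (2 * \<delta>)" using close K by (simp add: mult_left_mono)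
      finally show "(1 - \<beta>) * S y + \<beta> * y \<le> M + K * (2 * \<delta>)" .
    qed
    moreover have "\<bar>s - \<sigma>\<bar> * \<bar>r m - \<alpha>\<bar> \<le> \<bar>s - \<sigma>\<bar> * \<delta>"
      using m by (intro mult_left_mono) auto
    moreover have "s * (1 - \<alpha>) + \<sigma> * \<alpha> = s * (1 - r m) + \<sigma> * r m + (s - \<sigma>) * (r m - \<alpha>)"
      by (simp add: algebra_simps)
    moreover have "(s - \<sigma>) * (r m - \<alpha>) \<le> \<bar>s - \<sigma>\<bar> * \<bar>r m - \<alpha>\<bar>"
      by (metis abs_ge_self abs_mult)
    ultimately show ?thesis by (simp add: algebra_simps)
  qed
  have "s * (1 - \<alpha>) + \<sigma> * \<alpha> \<le> M"
  proof (rule field_le_epsilon)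
    fix e :: real assume "0 < e"
    define \<delta> where "\<delta> = min (w / 2) (e / (2 * K + \<bar>s - \<sigma>\<bar> + 1))"
    have "0 < \<delta>" "2 * \<delta> \<le> w" using \<open>0 < e\<close> \<open>0 < w\<close> K by (simp_all add: \<delta>_def)
    moreover have "(2 * K + \<bar>s - \<sigma>\<bar>) * \<delta> \<le> e"
    proof -
      have "\<delta> \<le> e / (2 * K + \<bar>s - \<sigma>\<bar> + 1)" by (simp add: \<delta>_def)
      then have "\<delta> * (2 * K + \<bar>s - \<sigma>\<bar> + 1) \<le> e" using K by (simp add: le_divide_eq)
      then show ?thesis using \<open>0 < \<delta>\<close> by (simp add: algebra_simps)
    qed
    ultimately show "s * (1 - \<alpha>) + \<sigma> * \<alpha> \<le> M + e" using approx by fastforce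
  qed
  then have "(1 - \<alpha>) * s \<le> (1 - \<alpha>) * S \<sigma>" by (simp add: M_def algebra_simps)
  moreover have "\<alpha> < 1" unfolding \<alpha>_def using dual_slope_bounds[OF S'_neg] by blast
  ultimately show ?thesis by simp
qed

lemma SUP_ereal_eq_if_dense_below:
  fixes A :: "real set" and a :: real
  assumes below: "\<And>s. s < a \<Longrightarrow> s \<in> A" and bounded: "\<And>s. s \<in> A \<Longrightarrow> s \<le> a"
  shows "(SUP s\<in>A. ereal s) = ereal a"
proof (rule antisym)
  show "(SUP s\<in>A. ereal s) \<le> ereal a" by (rule SUP_least) (simp add: bounded)
  show "ereal a \<le> (SUP s\<in>A. ereal s)"
  proof (rule ccontr)
    assume "\<not> ereal a \<le> (SUP s\<in>A. ereal s)"
    then obtain z where "(SUP s\<in>A. ereal s) < ereal z" "z < a"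
      using ereal_dense2 not_le by (metis ereal_less(2) less_ereal.simps(1))
    moreover from \<open>z < a\<close> have "ereal z \<le> (SUP s\<in>A. ereal s)" by (intro SUP_upper below)
    ultimately show False by simp
  qed
qed

theorem theorem2p1:
  fixes x0 :: real
    and S S' S'' :: "real \<Rightarrow> real"
    and \<Lambda> :: "nat \<Rightarrow> nat set"
    and r :: "nat \<Rightarrow> real"
    and Cc lam c :: "nat \<Rightarrow> int \<Rightarrow> real"
  assumes S_deriv: "\<And>\<sigma>. (S has_real_derivative S' \<sigma>) (at \<sigma>)"
    and S'_deriv: "\<And>\<sigma>. (S' has_real_derivative S'' \<sigma>) (at \<sigma>)"
    and S_decr: "antimono S"
    and S''_neg: "\<And>\<sigma>. S'' \<sigma> < 0"
    and Lam_inf: "\<And>m. infinite (\<Lambda> m)"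
    and Lam_disj: "\<And>m n. m \<noteq> n \<Longrightarrow> \<Lambda> m \<inter> \<Lambda> n = {}"
    and Lam_cover: "(\<Union>m. \<Lambda> m) = UNIV"
    and r_sub: "range r \<subseteq> range (\<lambda>\<sigma>. S' \<sigma> / (S' \<sigma> - 1))"
    and r_dense: "range (\<lambda>\<sigma>. S' \<sigma> / (S' \<sigma> - 1)) \<subseteq> closure (range r)"
    and Cc_pos: "\<And>j k. (j, k) \<in> loc_dom x0 \<Longrightarrow> Cc j k > 0"
    and lam_pos: "\<And>j k. (j, k) \<in> loc_dom x0 \<Longrightarrow> lam j k > 0"
    and cond_i: "\<And>C kk. (\<forall>j. (j, kk j) \<in> loc_dom x0) \<Longrightarrow>
        limsup (\<lambda>j. ereal (log 2 (Cc j (kk j)) / real j + C * (log 2 (lam j (kk j)) / real j))) \<le> 0"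
    and cond_ii: "\<And>jj kk. filterlim jj at_top sequentially \<Longrightarrow>
        (\<forall>n. (jj n, kk n) \<in> I_set x0 \<Lambda> r) \<Longrightarrow>
        ((\<lambda>n. log 2 (Cc (jj n) (kk n)) / real (jj n)) \<longlonglongrightarrow> 0) \<and>
        ((\<lambda>n. log 2 (lam (jj n) (kk n)) / real (jj n)) \<longlonglongrightarrow> 0)"
    and c_bound: "\<And>j k. (j, k) \<in> loc_dom x0 \<Longrightarrow>
        \<bar>c j k\<bar> \<le> Cc j k * (INF \<sigma>. 2 powr (- real j * S \<sigma>) *
            ((1 + \<bar>real_of_int k - 2 ^ j * x0\<bar>) / lam j k) powr (S \<sigma> - \<sigma>))"
    and c_eq: "\<And>j k. (j, k) \<in> I_set x0 \<Lambda> r \<Longrightarrow>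
        \<bar>c j k\<bar> = Cc j k * (INF \<sigma>. 2 powr (- real j * S \<sigma>) *
            ((1 + \<bar>real_of_int k - 2 ^ j * x0\<bar>) / lam j k) powr (S \<sigma> - \<sigma>))"
  shows "\<forall>\<sigma>. two_microlocal_frontier x0 c \<sigma> = ereal (S \<sigma>)"
proof
  fix \<sigma>
  have S'_neg: "\<And>x. S' x < 0"
    by (rule antimono_concave_deriv_neg[OF S_deriv S'_deriv S''_neg S_decr])
  have slopes: "range (\<lambda>\<sigma>. S' \<sigma> / (S' \<sigma> - 1)) = dual_slope ` range S'"
    by (auto simp: dual_slope_def)
  show "two_microlocal_frontier x0 c \<sigma> = ereal (S \<sigma>)"
    unfolding two_microlocal_frontier_def
  proof (rule SUP_ereal_eq_if_dense_below)
    fix s assume "s < S \<sigma>"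
    then show "s \<in> {s. two_microlocal x0 c s (\<sigma> - s)}"
      using frontier_lower_bound[OF DERIV_isCont[OF S_deriv] Cc_pos lam_pos cond_i c_bound] by simp
  next
    fix s assume "s \<in> {s. two_microlocal x0 c s (\<sigma> - s)}"
    then show "s \<le> S \<sigma>"
      using frontier_upper_bound[OF S_deriv S'_deriv S''_neg S'_neg Lam_inf
          r_sub[unfolded slopes] r_dense[unfolded slopes] Cc_pos lam_pos cond_ii c_eq]
      by simp
  qed
qed

end
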